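(* Let $a=1/\sqrt3$ and $b=\sqrt{2/3}$, and consider the eleven unit vectors in $\mathbb{R}^4$ given by the columns of $$\begin{pmatrix}1&0&0&0&0&a&a&a&a&a&a\\0&a&-a&a&a&b&-b&0&0&0&0\\0&a&a&-a&a&0&0&b&-b&0&0\\0&a&a&a&-a&0&0&0&0&b&-b\end{pmatrix}.$$ To each column $(r_0,r_1,r_2,r_3)$ associate the element of $\operatorname{PU}(2)$ represented by $r_0I+i(r_1X+r_2Y+r_3Z)$, and give the first element weight $1/16$ and each of the remaining ten weight $3/32$. This weighted set of $11$ elements is a weighted unitary $2$-design in $\operatorname{PU}(2)$.
   Context: $X,Y,Z$ are the Pauli matrices $X=\begin{pmatrix}0&1\\1&0\end{pmatrix}$, $Y=\begin{pmatrix}0&-i\\i&0\end{pmatrix}$, $Z=\begin{pmatrix}1&0\\0&-1\end{pmatrix}$. $\operatorname{PU}(2)=\operatorname{U}(2)/\operatorname{U}(1)$ with Haar probability measure $\mu$. A weighted unitary $2$-design is a finite $\mathscr{D}\subset\operatorname{PU}(d)$ with weights $w>0$, $\sum w=1$, and $\sum_{x}w(x)U(x)^{\otimes2}\otimes(U(x)^{\otimes2})^\dagger=\int d\mu(x)U(x)^{\otimes2}\otimes(U(x)^{\otimes2})^\dagger$, $U(x)$ a representative of $x$. *)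

theory Defs
  imports "HOL-Analysis.Analysis" "HOL-Probability.Probability"
begin

type_synonym cmat2 = "complex^2^2"

definition adjoint :: "complex^'n^'n \<Rightarrow> complex^'n^'n" where
  "adjoint A = (\<chi> i j. cnj (A $ j $ i))"

definition kron :: "complex^'n^'m \<Rightarrow> complex^'q^'p \<Rightarrow> complex^('n \<times> 'q)^('m \<times> 'p)" where
  "kron A B = (\<chi> r c. A $ fst r $ fst c * B $ snd r $ snd c)"

definition U2 :: "cmat2 set" where
  "U2 = {U. U ** adjoint U = mat 1}"

text \<open>U tensor U tensor (U tensor U)^dagger.  It is invariant under U \<mapsto> cU with |c|=1,
  hence well defined on PU(2).\<close>
definition twirl2 :: "cmat2 \<Rightarrow> complex^((2 \<times> 2) \<times> (2 \<times> 2))^((2 \<times> 2) \<times> (2 \<times> 2))" where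
  "twirl2 U = kron (kron U U) (adjoint (kron U U))"

text \<open>Integrals of functions on PU(2) against the Haar measure of PU(2) coincide with integrals of
  their lifts against the Haar measure of U(2).\<close>
definition haar_U2 :: "cmat2 measure \<Rightarrow> bool" where
  "haar_U2 M \<longleftrightarrow> prob_space M \<and> sets M = sets borel \<and> emeasure M U2 = 1 \<and>
     (\<forall>V\<in>U2. \<forall>A\<in>sets borel. emeasure M {U. V ** U \<in> A} = emeasure M A)"

definition same_in_PU :: "cmat2 \<Rightarrow> cmat2 \<Rightarrow> bool" where
  "same_in_PU U V \<longleftrightarrow> (\<exists>c::complex. U = (\<chi> i j. c * V $ i $ j))"

definition weighted_2design :: "'i set \<Rightarrow> ('i \<Rightarrow> cmat2) \<Rightarrow> ('i \<Rightarrow> real) \<Rightarrow> bool" where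
  "weighted_2design D U w \<longleftrightarrow>
     finite D \<and> (\<forall>x\<in>D. U x \<in> U2) \<and>
     (\<forall>x\<in>D. \<forall>y\<in>D. x \<noteq> y \<longrightarrow> \<not> same_in_PU (U x) (U y)) \<and>
     (\<forall>x\<in>D. w x > 0) \<and> sum w D = 1 \<and>
     (\<forall>M. haar_U2 M \<longrightarrow> (\<Sum>x\<in>D. w x *\<^sub>R twirl2 (U x)) = integral\<^sup>L M twirl2)"

definition pauliX :: cmat2 where "pauliX = vector [vector [0, 1], vector [1, 0]]"
definition pauliY :: cmat2 where "pauliY = vector [vector [0, -\<i>], vector [\<i>, 0]]"
definition pauliZ :: cmat2 where "pauliZ = vector [vector [1, 0], vector [0, -1]]"

definition quat_elem :: "real \<times> real \<times> real \<times> real \<Rightarrow> cmat2" where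
  "quat_elem r = (case r of (r0, r1, r2, r3) \<Rightarrow>
     (\<chi> i j. complex_of_real r0 * (mat 1 :: cmat2) $ i $ j +
        \<i> * (complex_of_real r1 * pauliX $ i $ j + complex_of_real r2 * pauliY $ i $ j
              + complex_of_real r3 * pauliZ $ i $ j)))"

definition ca :: real where "ca = 1 / sqrt 3"
definition cb :: real where "cb = sqrt (2 / 3)"

definition design_cols :: "(real \<times> real \<times> real \<times> real) list" where
  "design_cols = [(1, 0, 0, 0),
     (0, ca, ca, ca), (0, -ca, ca, ca), (0, ca, -ca, ca), (0, ca, ca, -ca),
     (ca, cb, 0, 0), (ca, -cb, 0, 0), (ca, 0, cb, 0), (ca, 0, -cb, 0),
     (ca, 0, 0, cb), (ca, 0, 0, -cb)]"

definition design_weights :: "real list" where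
  "design_weights = [1/16] @ replicate 10 (3/32)"

end

theory Submission
  imports Defs
begin

(*
  Both sides of the twirl identity are 16 x 16 matrices whose entries are fourth
  moments  U_ij U_kl conj(U_pq) conj(U_rs), averaged either over the Haar measure or over the
  weighted design.  Both averages equal the same closed formula, the order-2 Weingarten
  formula for U(2):

    delta_ip delta_kr (delta_jq delta_ls / 3 - delta_js delta_lq / 6)
  + delta_ir delta_kp (delta_js delta_lq / 3 - delta_jq delta_ls / 6).

  Haar side: U(2) is compact, so every continuous function is Haar integrable, and left
  invariance turns each unitary V into a linear relation between the moments.  The phase gate
  diag(i,1) kills all moments whose index pattern is unbalanced, the Pauli X gate identifies
  the moments with swapped indices, the Hadamard gate yields one further linear relation, and
  contracting with the orthonormality of the columns of U gives two more; together these
  determine all moments.  Design side: the eleven explicit quaternions are evaluated directly.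
*)

section \<open>The unitary group U(2)\<close>

text \<open>Unitary matrices have orthonormal rows and (since a one-sided inverse is two-sided)
  orthonormal columns.\<close>

lemma U2_row_orthonormal:
  assumes "U \<in> U2"
  shows "(\<Sum>k\<in>UNIV. U$i$k * cnj (U$j$k)) = (if i = j then 1 else 0)"
  using assms unfolding U2_def by (auto simp: vec_eq_iff matrix_matrix_mult_def adjoint_def mat_def)

lemma U2_col_orthonormal:
  assumes "U \<in> U2"
  shows "(\<Sum>k\<in>UNIV. U$k$i * cnj (U$k$j)) = (if i = j then 1 else 0)"
proof -
  have "adjoint U ** U = mat 1"
    using assms unfolding U2_def using matrix_left_right_inverse by blast
  then have "(adjoint U ** U) $ j $ i = mat 1 $ j $ i" by simp
  then show ?thesis by (auto simp: matrix_matrix_mult_def adjoint_def mat_def mult.commute)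
qed

lemma U2_row_norm:
  assumes "U \<in> U2"
  shows "norm (U $ i) = 1"
proof -
  have "complex_of_real (\<Sum>k\<in>UNIV. (cmod (U$i$k))\<^sup>2) = (\<Sum>k\<in>UNIV. U$i$k * cnj (U$i$k))"
    by (simp only: of_real_sum complex_norm_square)
  also have "\<dots> = 1" using U2_row_orthonormal[OF assms, of i i] by simp
  finally have "(\<Sum>k\<in>UNIV. (cmod (U$i$k))\<^sup>2) = 1" using of_real_eq_1_iff by blast
  then show ?thesis by (simp add: norm_vec_def L2_set_def)
qed

text \<open>Compactness of U(2) is what makes every continuous function Haar integrable.\<close>

lemma compact_U2: "compact U2"
proof -
  have "norm U \<le> 2" if "U \<in> U2" for U
  proof -
    have "norm U \<le> (\<Sum>i\<in>UNIV. norm (U $ i))" unfolding norm_vec_def by (rule L2_set_le_sum) auto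
    then show ?thesis using U2_row_norm[OF that] by simp
  qed
  then have "bounded U2" by (auto simp: bounded_iff)
  moreover have "continuous_on UNIV (\<lambda>U::cmat2. U ** adjoint U)"
    unfolding matrix_matrix_mult_def adjoint_def by (intro continuous_intros)
  then have "closed U2" unfolding U2_def by (rule closed_Collect_eq[OF _ continuous_on_const])
  ultimately show ?thesis by (simp add: compact_eq_bounded_closed)
qed

section \<open>Fourth moments and the Weingarten formula\<close>

definition delta :: "2 \<Rightarrow> 2 \<Rightarrow> complex" where
  "delta x y = (if x = y then 1 else 0)"

lemma delta_simps [simp]: "delta 1 1 = 1" "delta 2 2 = 1" "delta 1 2 = 0" "delta 2 1 = 0"
  by (simp_all add: delta_def)

definition quartic :: "cmat2 \<Rightarrow> 2 \<Rightarrow> 2 \<Rightarrow> 2 \<Rightarrow> 2 \<Rightarrow> 2 \<Rightarrow> 2 \<Rightarrow> 2 \<Rightarrow> 2 \<Rightarrow> complex" where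
  "quartic U i j k l p q r s = U$i$j * U$k$l * cnj (U$p$q) * cnj (U$r$s)"

definition weingarten :: "2 \<Rightarrow> 2 \<Rightarrow> 2 \<Rightarrow> 2 \<Rightarrow> 2 \<Rightarrow> 2 \<Rightarrow> 2 \<Rightarrow> 2 \<Rightarrow> complex" where
  "weingarten i j k l p q r s =
     delta i p * delta k r * (delta j q * delta l s / 3 - delta j s * delta l q / 6) +
     delta i r * delta k p * (delta j s * delta l q / 3 - delta j q * delta l s / 6)"

lemma twirl2_entry:
  "twirl2 U $ ((i,k),(p,r)) $ ((j,l),(q,s)) = quartic U i j k l q p s r"
  by (simp add: twirl2_def kron_def adjoint_def quartic_def)

lemma continuous_quartic: "continuous_on UNIV (\<lambda>U. quartic U i j k l p q r s)"
  unfolding quartic_def by (intro continuous_intros)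

lemma quartic_left_mult:
  "quartic (V ** U) i j k l p q r s = (\<Sum>i'\<in>UNIV. \<Sum>k'\<in>UNIV. \<Sum>p'\<in>UNIV. \<Sum>r'\<in>UNIV.
     V$i$i' * V$k$k' * cnj (V$p$p') * cnj (V$r$r') * quartic U i' j k' l p' q r' s)"
  unfolding quartic_def matrix_matrix_mult_def by (simp add: sum_2 algebra_simps)

lemma quartic_contraction_direct:
  assumes "U \<in> U2"
  shows "(\<Sum>a\<in>UNIV. \<Sum>b\<in>UNIV. quartic U a j b l a q b s) = delta j q * delta l s"
proof -
  have "U$1$x * cnj (U$1$y) + U$2$x * cnj (U$2$y) = delta x y" for x y
    using U2_col_orthonormal[OF assms, of x y] by (simp add: sum_2 delta_def)
  from this[of j q, symmetric] this[of l s, symmetric] show ?thesis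
    by (simp add: quartic_def sum_2 algebra_simps)
qed

lemma quartic_contraction_crossed:
  assumes "U \<in> U2"
  shows "(\<Sum>a\<in>UNIV. \<Sum>b\<in>UNIV. quartic U a j b l b q a s) = delta j s * delta l q"
proof -
  have "U$1$x * cnj (U$1$y) + U$2$x * cnj (U$2$y) = delta x y" for x y
    using U2_col_orthonormal[OF assms, of x y] by (simp add: sum_2 delta_def)
  from this[of j s, symmetric] this[of l q, symmetric] show ?thesis
    by (simp add: quartic_def sum_2 algebra_simps)
qed

text \<open>The unitaries whose invariance relations determine the moments: the phase gate
  diag(i,1), the Hadamard gate and (from the definitions) Pauli X.\<close>
definition phase :: "2 \<Rightarrow> complex" where
  "phase x = (if x = 1 then \<i> else 1)"

definition phase_gate :: cmat2 where
  "phase_gate = (\<chi> a b. if a = b then phase a else 0)"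

definition inv_sqrt2 :: complex where
  "inv_sqrt2 = of_real (1 / sqrt 2)"

definition hadamard :: cmat2 where
  "hadamard = (\<chi> a b. if a = 2 \<and> b = 2 then - inv_sqrt2 else inv_sqrt2)"

lemma cnj_inv_sqrt2 [simp]: "cnj inv_sqrt2 = inv_sqrt2"
  by (simp add: inv_sqrt2_def)

lemma inv_sqrt2_sq: "inv_sqrt2 * inv_sqrt2 = 1/2"
proof -
  have "inv_sqrt2 * inv_sqrt2 = complex_of_real (1 / sqrt 2 * (1 / sqrt 2))"
    unfolding inv_sqrt2_def by (rule of_real_mult[symmetric])
  then show ?thesis by simp
qed

lemma phase_gate_entries:
  "phase_gate $ 1 $ 1 = \<i>" "phase_gate $ 2 $ 2 = 1" "phase_gate $ 1 $ 2 = 0" "phase_gate $ 2 $ 1 = 0"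
  by (simp_all add: phase_gate_def phase_def)

lemma phase_gate_U2: "phase_gate \<in> U2"
  unfolding U2_def
  by (simp add: vec_eq_iff forall_2 matrix_matrix_mult_def adjoint_def mat_def sum_2 phase_gate_entries)

lemma pauliX_U2: "pauliX \<in> U2"
  unfolding U2_def pauliX_def
  by (simp add: vec_eq_iff forall_2 matrix_matrix_mult_def adjoint_def mat_def sum_2)

lemma hadamard_U2: "hadamard \<in> U2"
  unfolding U2_def hadamard_def
  by (simp add: vec_eq_iff forall_2 matrix_matrix_mult_def adjoint_def mat_def sum_2 inv_sqrt2_sq)

lemma phase_gate_conjugation:
  "(\<Sum>i'\<in>UNIV. \<Sum>k'\<in>UNIV. \<Sum>p'\<in>UNIV. \<Sum>r'\<in>UNIV. phase_gate$i$i' * phase_gate$k$k' *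
      cnj (phase_gate$p$p') * cnj (phase_gate$r$r') * m i' k' p' r') =
   phase i * phase k * cnj (phase p) * cnj (phase r) * m i k p r"
proof -
  have "\<forall>i k p r. (\<Sum>i'\<in>UNIV. \<Sum>k'\<in>UNIV. \<Sum>p'\<in>UNIV. \<Sum>r'\<in>UNIV. phase_gate$i$i' *
      phase_gate$k$k' * cnj (phase_gate$p$p') * cnj (phase_gate$r$r') * m i' k' p' r') =
    phase i * phase k * cnj (phase p) * cnj (phase r) * m i k p r"
    unfolding forall_2 by (simp add: phase_gate_entries phase_def sum_2)
  then show ?thesis by blast
qed

text \<open>The phases are unimodular, so a phase factor equals 1 exactly when the upper and
  lower phases agree.\<close>
lemma phase_balance:
  "phase i * phase k * cnj (phase p) * cnj (phase r) = 1 \<longleftrightarrow> phase i * phase k = phase p * phase r"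
proof -
  have "\<forall>i k p r. phase i * phase k * cnj (phase p) * cnj (phase r) = 1 \<longleftrightarrow>
      phase i * phase k = phase p * phase r"
    unfolding forall_2 by (simp add: phase_def complex_eq_iff)
  then show ?thesis by blast
qed

text \<open>Hence an entry of a phase-invariant tensor vanishes unless its upper and lower row
  indices carry the same total phase, i.e. contain the same number of 1s.\<close>
lemma phase_invariant_unbalanced_zero:
  fixes m :: "2 \<Rightarrow> 2 \<Rightarrow> 2 \<Rightarrow> 2 \<Rightarrow> complex"
  assumes "m i k p r = phase i * phase k * cnj (phase p) * cnj (phase r) * m i k p r"
    and "phase i * phase k \<noteq> phase p * phase r"
  shows "m i k p r = 0"
proof -
  have "(1 - phase i * phase k * cnj (phase p) * cnj (phase r)) * m i k p r = 0"
    using assms(1) by (simp add: algebra_simps)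
  then show ?thesis using assms(2) phase_balance by simp
qed

text \<open>The first row of the Hadamard gate is constant, so the (1,1,1,1) entry of a conjugated
  4-index tensor is the average of all its entries.\<close>
lemma hadamard_conjugation_1111:
  "(\<Sum>i'\<in>UNIV. \<Sum>k'\<in>UNIV. \<Sum>p'\<in>UNIV. \<Sum>r'\<in>UNIV. hadamard$1$i' * hadamard$1$k' *
      cnj (hadamard$1$p') * cnj (hadamard$1$r') * m i' k' p' r') =
   1/4 * (\<Sum>i'\<in>UNIV. \<Sum>k'\<in>UNIV. \<Sum>p'\<in>UNIV. \<Sum>r'\<in>UNIV. m i' k' p' r')"
proof -
  have "hadamard$1$i' * hadamard$1$k' * cnj (hadamard$1$p') * cnj (hadamard$1$r') = 1/4"
    for i' k' p' r'
    by (simp add: hadamard_def inv_sqrt2_sq mult.assoc[symmetric])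
  then show ?thesis by (simp only: sum_distrib_left)
qed

text \<open>Pauli X swaps the two rows, so conjugation by it flips every index.\<close>
definition flip :: "2 \<Rightarrow> 2" where
  "flip x = (if x = 1 then 2 else 1)"

lemma pauliX_conjugation:
  "(\<Sum>i'\<in>UNIV. \<Sum>k'\<in>UNIV. \<Sum>p'\<in>UNIV. \<Sum>r'\<in>UNIV. pauliX$i$i' * pauliX$k$k' *
      cnj (pauliX$p$p') * cnj (pauliX$r$r') * m i' k' p' r') = m (flip i) (flip k) (flip p) (flip r)"
proof -
  have "\<forall>i k p r. (\<Sum>i'\<in>UNIV. \<Sum>k'\<in>UNIV. \<Sum>p'\<in>UNIV. \<Sum>r'\<in>UNIV. pauliX$i$i' * pauliX$k$k' *
      cnj (pauliX$p$p') * cnj (pauliX$r$r') * m i' k' p' r') = m (flip i) (flip k) (flip p) (flip r)"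
    unfolding forall_2 by (simp add: pauliX_def flip_def sum_2)
  then show ?thesis by blast
qed

lemma moments_determined:
  fixes m :: "2 \<Rightarrow> 2 \<Rightarrow> 2 \<Rightarrow> 2 \<Rightarrow> complex" and A B :: complex
  assumes zero: "m 1 1 1 2 = 0" "m 1 1 2 1 = 0" "m 1 1 2 2 = 0" "m 1 2 1 1 = 0" "m 2 1 1 1 = 0"
      "m 1 2 2 2 = 0" "m 2 1 2 2 = 0" "m 2 2 1 1 = 0" "m 2 2 1 2 = 0" "m 2 2 2 1 = 0"
    and flip: "m 2 2 2 2 = m 1 1 1 1" "m 2 1 2 1 = m 1 2 1 2" "m 2 1 1 2 = m 1 2 2 1"
    and average: "m 1 1 1 1 = 1/4 * (\<Sum>i\<in>UNIV. \<Sum>k\<in>UNIV. \<Sum>p\<in>UNIV. \<Sum>r\<in>UNIV. m i k p r)"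
    and direct: "(\<Sum>a\<in>UNIV. \<Sum>b\<in>UNIV. m a b a b) = A"
    and crossed: "(\<Sum>a\<in>UNIV. \<Sum>b\<in>UNIV. m a b b a) = B"
  shows "m i k p r = delta i p * delta k r * (A/3 - B/6) + delta i r * delta k p * (B/3 - A/6)"
proof -
  have "m 1 1 1 1 = m 1 2 1 2 + m 1 2 2 1"
    using average by (simp add: sum_2 zero flip) algebra
  moreover have "2 * m 1 1 1 1 + 2 * m 1 2 1 2 = A"
    using direct by (simp add: sum_2 flip) (metis add.commute)
  moreover have "2 * m 1 1 1 1 + 2 * m 1 2 2 1 = B"
    using crossed by (simp add: sum_2 flip) (metis add.commute)
  ultimately have sol: "m 1 1 1 1 = (A + B)/6" "m 1 2 1 2 = A/3 - B/6" "m 1 2 2 1 = B/3 - A/6"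
    by algebra+
  have "\<forall>i k p r. m i k p r =
      delta i p * delta k r * (A/3 - B/6) + delta i r * delta k p * (B/3 - A/6)"
    unfolding forall_2 by (simp add: zero flip sol field_simps)
  then show ?thesis by blast
qed

section \<open>Haar integrals\<close>

definition haar_moment :: "cmat2 measure \<Rightarrow> 2 \<Rightarrow> 2 \<Rightarrow> 2 \<Rightarrow> 2 \<Rightarrow> 2 \<Rightarrow> 2 \<Rightarrow> 2 \<Rightarrow> 2 \<Rightarrow> complex" where
  "haar_moment M i j k l p q r s = integral\<^sup>L M (\<lambda>U. quartic U i j k l p q r s)"

context
  fixes M :: "cmat2 measure"
  assumes haar: "haar_U2 M"
begin

interpretation prob_space M
  using haar unfolding haar_U2_def by auto

lemma sets_haar: "sets M = sets borel"
  using haar unfolding haar_U2_def by auto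

lemma haar_measurable_continuous:
  "continuous_on UNIV F \<Longrightarrow> F \<in> borel_measurable M"
  using borel_measurable_continuous_onI measurable_cong_sets[OF sets_haar refl] by blast

lemma AE_haar_U2: "AE U in M. U \<in> U2"
proof (rule AE_prob_1)
  have "U2 \<in> sets M" using sets_haar compact_U2 by (simp add: compact_imp_closed)
  then show "prob U2 = 1" using haar unfolding haar_U2_def by (simp add: measure_def)
qed

text \<open>Continuous functions are bounded on the compact set U(2), which carries all the mass.\<close>
lemma haar_integrable_continuous:
  fixes F :: "cmat2 \<Rightarrow> 'b::{banach, second_countable_topology}"
  assumes F: "continuous_on UNIV F"
  shows "integrable M F"
proof -
  have "bounded (F ` U2)"
    by (intro compact_imp_bounded compact_continuous_image continuous_on_subset[OF F] compact_U2) auto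
  then obtain B where B: "\<And>U. U \<in> U2 \<Longrightarrow> norm (F U) \<le> B" by (auto simp: bounded_iff)
  show ?thesis
  proof (rule integrable_const_bound)
    show "AE U in M. norm (F U) \<le> B" using AE_haar_U2 by eventually_elim (rule B)
  qed (rule haar_measurable_continuous[OF F])
qed

lemma haar_integral_left_invariant:
  fixes F :: "cmat2 \<Rightarrow> 'b::{banach, second_countable_topology}"
  assumes V: "V \<in> U2" and F: "continuous_on UNIV F"
  shows "integral\<^sup>L M (\<lambda>U. F (V ** U)) = integral\<^sup>L M F"
proof -
  have mult_meas: "(\<lambda>U. V ** U) \<in> measurable M M"
  proof -
    have "continuous_on UNIV (\<lambda>U::cmat2. V ** U)"
      unfolding matrix_matrix_mult_def by (intro continuous_intros)
    then show ?thesis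
      using borel_measurable_continuous_onI measurable_cong_sets[OF sets_haar sets_haar] by blast
  qed
  have "distr M M (\<lambda>U. V ** U) = M"
  proof (rule measure_eqI)
    fix A assume "A \<in> sets (distr M M (\<lambda>U. V ** U))"
    then have A: "A \<in> sets borel" using sets_haar by simp
    have "emeasure (distr M M (\<lambda>U. V ** U)) A = emeasure M {U. V ** U \<in> A}"
      using A sets_haar mult_meas sets_eq_imp_space_eq[OF sets_haar]
      by (simp add: emeasure_distr vimage_def)
    also have "\<dots> = emeasure M A" using haar V A unfolding haar_U2_def by blast
    finally show "emeasure (distr M M (\<lambda>U. V ** U)) A = emeasure M A" .
  qed simp
  then show ?thesis
    using integral_distr[OF mult_meas haar_measurable_continuous[OF F]] by simp
qed

lemma haar_integral_AE_const:
  fixes c :: "'b::{banach, second_countable_topology}"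
  assumes "continuous_on UNIV F" "AE U in M. F U = c"
  shows "integral\<^sup>L M F = c"
proof -
  have "integral\<^sup>L M F = integral\<^sup>L M (\<lambda>_. c)"
    using assms by (intro integral_cong_AE haar_measurable_continuous) auto
  then show ?thesis by (simp add: prob_space)
qed

lemma haar_moment_left_invariant:
  assumes V: "V \<in> U2"
  shows "haar_moment M i j k l p q r s = (\<Sum>i'\<in>UNIV. \<Sum>k'\<in>UNIV. \<Sum>p'\<in>UNIV. \<Sum>r'\<in>UNIV.
     V$i$i' * V$k$k' * cnj (V$p$p') * cnj (V$r$r') * haar_moment M i' j k' l p' q r' s)"
proof -
  have "haar_moment M i j k l p q r s = integral\<^sup>L M (\<lambda>U. quartic (V ** U) i j k l p q r s)"
    unfolding haar_moment_def
    using haar_integral_left_invariant[OF V continuous_quartic] by simp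
  then show ?thesis
    unfolding quartic_left_mult haar_moment_def
    by (simp add: haar_integrable_continuous continuous_quartic)
qed

text \<open>The contractions of the moment tensor are those of the integrand, which are constant on
  U(2).\<close>
lemma haar_moment_contraction_direct:
  "(\<Sum>a\<in>UNIV. \<Sum>b\<in>UNIV. haar_moment M a j b l a q b s) = delta j q * delta l s"
proof -
  have "(\<Sum>a\<in>UNIV. \<Sum>b\<in>UNIV. haar_moment M a j b l a q b s) =
      integral\<^sup>L M (\<lambda>U. \<Sum>a\<in>UNIV. \<Sum>b\<in>UNIV. quartic U a j b l a q b s)"
    unfolding haar_moment_def by (simp add: haar_integrable_continuous continuous_quartic)
  also have "\<dots> = delta j q * delta l s"
    using AE_haar_U2 quartic_contraction_direct
    by (intro haar_integral_AE_const continuous_on_sum continuous_quartic) auto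
  finally show ?thesis .
qed

lemma haar_moment_contraction_crossed:
  "(\<Sum>a\<in>UNIV. \<Sum>b\<in>UNIV. haar_moment M a j b l b q a s) = delta j s * delta l q"
proof -
  have "(\<Sum>a\<in>UNIV. \<Sum>b\<in>UNIV. haar_moment M a j b l b q a s) =
      integral\<^sup>L M (\<lambda>U. \<Sum>a\<in>UNIV. \<Sum>b\<in>UNIV. quartic U a j b l b q a s)"
    unfolding haar_moment_def by (simp add: haar_integrable_continuous continuous_quartic)
  also have "\<dots> = delta j s * delta l q"
    using AE_haar_U2 quartic_contraction_crossed
    by (intro haar_integral_AE_const continuous_on_sum continuous_quartic) auto
  finally show ?thesis .
qed

theorem haar_moment_weingarten:
  "haar_moment M i j k l p q r s = weingarten i j k l p q r s"
proof -
  define m where "m i k p r = haar_moment M i j k l p q r s" for i k p r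
  have inv: "m i k p r = (\<Sum>i'\<in>UNIV. \<Sum>k'\<in>UNIV. \<Sum>p'\<in>UNIV. \<Sum>r'\<in>UNIV.
     V$i$i' * V$k$k' * cnj (V$p$p') * cnj (V$r$r') * m i' k' p' r')"
    if "V \<in> U2" for V i k p r
    unfolding m_def by (rule haar_moment_left_invariant[OF that])
  have zero: "m 1 1 1 2 = 0" "m 1 1 2 1 = 0" "m 1 1 2 2 = 0" "m 1 2 1 1 = 0" "m 2 1 1 1 = 0"
    "m 1 2 2 2 = 0" "m 2 1 2 2 = 0" "m 2 2 1 1 = 0" "m 2 2 1 2 = 0" "m 2 2 2 1 = 0"
    by (simp_all add: phase_invariant_unbalanced_zero[of m, OF inv[OF phase_gate_U2,
          unfolded phase_gate_conjugation]] phase_def complex_eq_iff)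
  have flip: "m 2 2 2 2 = m 1 1 1 1" "m 2 1 2 1 = m 1 2 1 2" "m 2 1 1 2 = m 1 2 2 1"
    using inv[OF pauliX_U2, unfolded pauliX_conjugation, of 2 2 2 2]
      inv[OF pauliX_U2, unfolded pauliX_conjugation, of 2 1 2 1]
      inv[OF pauliX_U2, unfolded pauliX_conjugation, of 2 1 1 2]
    by (simp_all add: flip_def)
  have "m i k p r = weingarten i j k l p q r s"
    unfolding weingarten_def
  proof (rule moments_determined[OF zero flip])
    show "m 1 1 1 1 = 1/4 * (\<Sum>i\<in>UNIV. \<Sum>k\<in>UNIV. \<Sum>p\<in>UNIV. \<Sum>r\<in>UNIV. m i k p r)"
      using inv[OF hadamard_U2, of 1 1 1 1] unfolding hadamard_conjugation_1111 .
    show "(\<Sum>a\<in>UNIV. \<Sum>b\<in>UNIV. m a b a b) = delta j q * delta l s"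
      unfolding m_def by (rule haar_moment_contraction_direct)
    show "(\<Sum>a\<in>UNIV. \<Sum>b\<in>UNIV. m a b b a) = delta j s * delta l q"
      unfolding m_def by (rule haar_moment_contraction_crossed)
  qed
  then show ?thesis unfolding m_def .
qed

text \<open>Entries of the Haar twirl, since integration commutes with taking an entry.\<close>
lemma haar_twirl2_entry:
  "integral\<^sup>L M twirl2 $ ((i,k),(p,r)) $ ((j,l),(q,s)) = weingarten i j k l q p s r"
proof -
  have "bounded_linear (\<lambda>A::complex^((2\<times>2)\<times>(2\<times>2))^((2\<times>2)\<times>(2\<times>2)). A $ x $ y)" for x y
    by (rule bounded_linear_compose[OF bounded_linear_vec_nth bounded_linear_vec_nth])
  moreover have "integrable M twirl2"
    unfolding twirl2_def kron_def adjoint_def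
    by (intro haar_integrable_continuous continuous_intros)
  ultimately have "integral\<^sup>L M twirl2 $ ((i,k),(p,r)) $ ((j,l),(q,s)) =
      haar_moment M i j k l q p s r"
    unfolding haar_moment_def twirl2_entry[symmetric] by (rule integral_bounded_linear[symmetric])
  then show ?thesis by (simp add: haar_moment_weingarten)
qed

end

section \<open>The explicit design\<close>

lemma quat_elem_explicit:
  "quat_elem (r0, r1, r2, r3) =
     vector [vector [Complex r0 r3, Complex r2 r1], vector [Complex (-r2) r1, Complex r0 (-r3)]]"
  unfolding quat_elem_def pauliX_def pauliY_def pauliZ_def
  by (simp add: vec_eq_iff forall_2 mat_def complex_eq_iff)

lemma quat_elem_U2:
  assumes "r0*r0 + r1*r1 + r2*r2 + r3*r3 = 1"
  shows "quat_elem (r0, r1, r2, r3) \<in> U2"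
  unfolding U2_def quat_elem_explicit using assms
  by (simp add: vec_eq_iff forall_2 matrix_matrix_mult_def adjoint_def mat_def sum_2
      complex_eq_iff algebra_simps)

definition proportional :: "real \<times> real \<times> real \<times> real \<Rightarrow> real \<times> real \<times> real \<times> real \<Rightarrow> bool" where
  "proportional r s = (case r of (r0, r1, r2, r3) \<Rightarrow> case s of (s0, s1, s2, s3) \<Rightarrow>
     \<exists>c. complex_of_real r0 = c * of_real s0 \<and> complex_of_real r1 = c * of_real s1 \<and>
       complex_of_real r2 = c * of_real s2 \<and> complex_of_real r3 = c * of_real s3)"

lemma same_in_PU_quat_elem:
  assumes "same_in_PU (quat_elem (r0, r1, r2, r3)) (quat_elem (s0, s1, s2, s3))"
  shows "proportional (r0, r1, r2, r3) (s0, s1, s2, s3)"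
proof -
  obtain c where c: "quat_elem (r0, r1, r2, r3) = (\<chi> i j. c * quat_elem (s0, s1, s2, s3) $ i $ j)"
    using assms unfolding same_in_PU_def by blast
  have cx: "Complex x y = of_real x + \<i> * of_real y" for x y by (simp add: complex_eq_iff)
  have e11: "of_real r0 + \<i> * of_real r3 = c * (of_real s0 + \<i> * of_real s3)"
    and e12: "of_real r2 + \<i> * of_real r1 = c * (of_real s2 + \<i> * of_real s1)"
    and e21: "- of_real r2 + \<i> * of_real r1 = c * (- of_real s2 + \<i> * of_real s1)"
    and e22: "of_real r0 - \<i> * of_real r3 = c * (of_real s0 - \<i> * of_real s3)"
    using arg_cong[OF c, of "\<lambda>A. A$1$1"] arg_cong[OF c, of "\<lambda>A. A$1$2"]
      arg_cong[OF c, of "\<lambda>A. A$2$1"] arg_cong[OF c, of "\<lambda>A. A$2$2"]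
    by (simp_all add: quat_elem_explicit cx)
  \<comment> \<open>Half-sums and half-differences of the entries recover the four coordinates.\<close>
  have x0: "complex_of_real r0 = c * of_real s0" using e11 e22 by algebra
  have "\<i> * (complex_of_real r3 - c * of_real s3) = 0" using e11 e22 by algebra
  then have x3: "complex_of_real r3 = c * of_real s3" by simp
  have "\<i> * (complex_of_real r1 - c * of_real s1) = 0" using e12 e21 by algebra
  then have x1: "complex_of_real r1 = c * of_real s1" by simp
  have x2: "complex_of_real r2 = c * of_real s2" using e12 e21 by algebra
  show ?thesis unfolding proportional_def using x0 x1 x2 x3 by auto
qed

lemma ca_sq: "ca * ca = 1/3"
  by (simp add: ca_def real_sqrt_mult[symmetric])

lemma cb_sq: "cb * cb = 2/3"
  by (simp add: cb_def real_sqrt_mult[symmetric])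

lemma ca_sq': "ca * (ca * x) = x/3"
  by (simp add: mult.assoc[symmetric] ca_sq)

lemma cb_sq': "cb * (cb * x) = 2*x/3"
  by (simp add: mult.assoc[symmetric] cb_sq)

lemma ca_cb_distinct: "0 < ca" "0 < cb" "ca \<noteq> 1" "cb \<noteq> 1" "ca \<noteq> cb"
proof -
  show "0 < ca" "0 < cb" by (simp_all add: ca_def cb_def)
  show "ca \<noteq> 1" "cb \<noteq> 1" "ca \<noteq> cb" using ca_sq cb_sq by auto
qed

lemma design_index_set: "{..<11::nat} = {0, 1, 2, 3, 4, 5, 6, 7, 8, 9, 10}"
  by (auto simp: numeral_eq_Suc less_Suc_eq)

lemma sum_design_index: "(\<Sum>x<(11::nat). F x) =
    F 0 + F 1 + F 2 + F 3 + F 4 + F 5 + F 6 + F 7 + F 8 + F 9 + (F 10 :: 'a::comm_monoid_add)"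
  by (simp add: numeral_eq_Suc lessThan_Suc add_ac)

lemma design_weight:
  assumes "x < 11"
  shows "design_weights ! x = (if x = 0 then 1/16 else 3/32)"
proof (cases "x = 0")
  case False
  then have "design_weights ! x = replicate 10 (3/32) ! (x - 1)"
    unfolding design_weights_def by (simp only: nth_append) simp
  also have "\<dots> = 3/32" using assms False by (intro nth_replicate) simp
  finally show ?thesis using False by simp
qed (simp add: design_weights_def)

lemma design_weights_pos: "x \<in> {..<11} \<Longrightarrow> design_weights ! x > 0"
  by (simp add: design_weight)

lemma design_weights_sum: "(\<Sum>x<11. design_weights ! x) = 1"
proof -
  have "(\<Sum>x<11. design_weights ! x) = (\<Sum>x<11::nat. if x = 0 then 1/16 else 3/32)"
    by (rule sum.cong) (auto simp: design_weight)
  also have "\<dots> = 1" unfolding design_index_set by simp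
  finally show ?thesis .
qed

lemma design_U2: "x \<in> {..<11} \<Longrightarrow> quat_elem (design_cols ! x) \<in> U2"
  unfolding design_index_set
  by (auto simp: design_cols_def ca_sq cb_sq intro!: quat_elem_U2)

lemma design_distinct:
  assumes "x \<in> {..<11}" "y \<in> {..<11}" "x \<noteq> y"
  shows "\<not> same_in_PU (quat_elem (design_cols ! x)) (quat_elem (design_cols ! y))"
proof -
  have "\<not> proportional (design_cols ! x) (design_cols ! y)"
    using assms ca_cb_distinct unfolding design_index_set
    by (auto simp: design_cols_def proportional_def)
  then show ?thesis
    by (metis prod.collapse same_in_PU_quat_elem)
qed

lemma design_moment_weingarten:
  "(\<Sum>x<11. complex_of_real (design_weights ! x) * quartic (quat_elem (design_cols ! x)) i j k l p q r s)
     = weingarten i j k l p q r s"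
proof -
  have "\<forall>i j k l p q r s. (\<Sum>x<11. complex_of_real (design_weights ! x) *
      quartic (quat_elem (design_cols ! x)) i j k l p q r s) = weingarten i j k l p q r s"
    unfolding sum_design_index forall_2 weingarten_def quartic_def
    by (simp add: design_cols_def design_weights_def quat_elem_explicit complex_eq_iff)
      (simp add: algebra_simps ca_sq cb_sq ca_sq' cb_sq')
  then show ?thesis by blast
qed

lemma design_twirl:
  assumes "haar_U2 M"
  shows "(\<Sum>x<11. design_weights ! x *\<^sub>R twirl2 (quat_elem (design_cols ! x))) =
    integral\<^sup>L M twirl2"
proof -
  have "(\<Sum>x<11. design_weights ! x *\<^sub>R twirl2 (quat_elem (design_cols ! x))) $ a $ b =
      integral\<^sup>L M twirl2 $ a $ b" for a b
  proof -
    obtain i k p r where a: "a = ((i, k), (p, r))" by (metis prod.collapse)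
    obtain j l q s where b: "b = ((j, l), (q, s))" by (metis prod.collapse)
    have "(\<Sum>x<11. design_weights ! x *\<^sub>R twirl2 (quat_elem (design_cols ! x))) $ a $ b =
        (\<Sum>x<11. complex_of_real (design_weights ! x) *
          quartic (quat_elem (design_cols ! x)) i j k l q p s r)"
      unfolding a b
      by (simp only: sum_component vector_scaleR_component twirl2_entry) (simp add: scaleR_conv_of_real)
    also have "\<dots> = integral\<^sup>L M twirl2 $ a $ b"
      unfolding a b by (simp only: design_moment_weingarten haar_twirl2_entry[OF assms])
    finally show ?thesis .
  qed
  then show ?thesis by (simp add: vec_eq_iff)
qed

theorem mainTheorem11:
  shows "weighted_2design {..<11::nat} (\<lambda>k. quat_elem (design_cols ! k)) (\<lambda>k. design_weights ! k)"
  unfolding weighted_2design_def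
  using design_U2 design_distinct design_weights_pos design_weights_sum design_twirl
  by auto

end
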